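(* Let $\mathcal{T}=(V,\mathsf{p})$ be a directed forest with leafless support $\mathring{\mathcal{T}}$. Then $v_0\in V$ is not a root of $\mathring{\mathcal{T}}$ if and only if $v_0\notin\mathrm{root}(\mathcal{T})$ and there exists a sequence $\{v_n\}_{n=1}^\infty\subseteq V$ such that $\mathsf{p}(v_{n+1})=v_n$ for all $n\in\{0,1,2,\dots\}$.
   Context: A directed forest is a pair $\mathcal{T}=(V,\mathsf{p})$ where $V$ is a nonempty set and $\mathsf{p}\colon V\to V$ satisfies: if $n\in\mathbb{N}$, $v\in V$ and $\mathsf{p}^n(v)=v$, then $\mathsf{p}(v)=v$. Roots: $\mathrm{root}(\mathcal{T})=\{v:\mathsf{p}(v)=v\}$. The forest is leafless if $\mathsf{p}(V)=V$. $(V,\mathsf{p}_1)$ is thinner than $(V,\mathsf{p}_2)$ if $\mathsf{p}_1(v)\in\{v,\mathsf{p}_2(v)\}$ for all $v\in V$ (a partial order). The leafless support $\mathring{\mathcal{T}}=(V,\mathring{\mathsf{p}})$ of $\mathcal{T}$ is the greatest (thickest) leafless directed forest on $V$ thinner than $\mathcal{T}$; such a greatest element exists. *)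

theory Defs
  imports Main
begin

definition directed_forest :: "('a \<Rightarrow> 'a) \<Rightarrow> bool" where
  "directed_forest p \<longleftrightarrow> (\<forall>n v. n \<ge> 1 \<longrightarrow> (p ^^ n) v = v \<longrightarrow> p v = v)"

definition roots :: "('a \<Rightarrow> 'a) \<Rightarrow> 'a set" where
  "roots p = {v. p v = v}"

definition leafless :: "('a \<Rightarrow> 'a) \<Rightarrow> bool" where
  "leafless p \<longleftrightarrow> range p = UNIV"

definition thinner :: "('a \<Rightarrow> 'a) \<Rightarrow> ('a \<Rightarrow> 'a) \<Rightarrow> bool" where
  "thinner p1 p2 \<longleftrightarrow> (\<forall>v. p1 v \<in> {v, p2 v})"

definition leafless_support :: "('a \<Rightarrow> 'a) \<Rightarrow> ('a \<Rightarrow> 'a)" where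
  "leafless_support p = (THE q. directed_forest q \<and> leafless q \<and> thinner q p \<and>
     (\<forall>q'. directed_forest q' \<and> leafless q' \<and> thinner q' p \<longrightarrow> thinner q' q))"

end

theory Submission
  imports Defs
begin

text \<open>Turning every vertex that starts no infinite chain of children into a root yields a
  leafless forest thinner than p, and it is the greatest one: in any leafless forest thinner than
  p one can pick preimages forever starting at a non-root, no vertex along that chain is a root,
  so each step of it is a p-step.\<close>

definition has_infinite_descent :: "('a \<Rightarrow> 'a) \<Rightarrow> 'a \<Rightarrow> bool" where
  "has_infinite_descent p w \<longleftrightarrow> (\<exists>v :: nat \<Rightarrow> 'a. v 0 = w \<and> (\<forall>n. p (v (Suc n)) = v n))"

definition leafless_part :: "('a \<Rightarrow> 'a) \<Rightarrow> 'a \<Rightarrow> 'a" where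
  "leafless_part p w = (if has_infinite_descent p w then p w else w)"

lemma thinner_funpow_reachable:
  assumes "thinner q p"
  shows "\<exists>k. (q ^^ n) v = (p ^^ k) v"
proof (induction n)
  case 0
  show ?case by (metis funpow_0)
next
  case (Suc n)
  then obtain k where k: "(q ^^ n) v = (p ^^ k) v" by blast
  have "q ((p ^^ k) v) \<in> {(p ^^ k) v, p ((p ^^ k) v)}"
    using assms unfolding thinner_def by blast
  then show ?case
    using k by (metis funpow.simps(2) funpow_Suc_right comp_apply insertE singletonD)
qed

lemma directed_forest_thinner:
  assumes "directed_forest p" and "thinner q p"
  shows "directed_forest q"
  unfolding directed_forest_def
proof (intro allI impI)
  fix n v assume "n \<ge> (1::nat)" and cycle: "(q ^^ n) v = v"
  show "q v = v"
  proof (rule ccontr)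
    assume moved: "q v \<noteq> v"
    then have qv: "q v = p v" using assms(2) unfolding thinner_def by blast
    obtain m where n: "n = Suc m" using \<open>n \<ge> 1\<close> by (cases n) auto
    obtain k where "(q ^^ m) (p v) = (p ^^ k) (p v)"
      using thinner_funpow_reachable[OF assms(2)] by blast
    then have "(p ^^ Suc k) v = v"
      using cycle qv n by (simp add: funpow_Suc_right del: funpow.simps)
    then have "p v = v" using assms(1) unfolding directed_forest_def by (metis le_add1 plus_1_eq_Suc)
    with moved qv show False by simp
  qed
qed

lemma thinner_antisym:
  assumes "thinner a b" and "thinner b a"
  shows "a = b"
proof
  fix v show "a v = b v" using assms unfolding thinner_def by (metis insert_iff singletonD)
qed

lemma leafless_support_eqI:
  assumes "directed_forest q" "leafless q" "thinner q p"
    and "\<And>q'. directed_forest q' \<Longrightarrow> leafless q' \<Longrightarrow> thinner q' p \<Longrightarrow> thinner q' q"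
  shows "leafless_support p = q"
  unfolding leafless_support_def
  by (rule the_equality) (use assms thinner_antisym in blast)+

lemma has_infinite_descent_step:
  assumes "has_infinite_descent p w"
  obtains u where "p u = w" and "has_infinite_descent p u"
proof -
  obtain v where "v 0 = w" and v: "\<forall>n. p (v (Suc n)) = v n"
    using assms unfolding has_infinite_descent_def by blast
  then have "p (v 1) = w" and "has_infinite_descent p (v 1)"
    unfolding has_infinite_descent_def by (auto intro!: exI[of _ "\<lambda>n. v (Suc n)"])
  then show thesis by (rule that)
qed

lemma leafless_has_infinite_descent:
  assumes "leafless q"
  shows "has_infinite_descent q x"
proof -
  have "surj q" using assms unfolding leafless_def .
  then have "q ((inv q ^^ Suc n) x) = (inv q ^^ n) x" for n
    by (simp add: surj_f_inv_f)
  then show ?thesis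
    unfolding has_infinite_descent_def by (intro exI[of _ "\<lambda>n. (inv q ^^ n) x"]) simp
qed

lemma has_infinite_descent_thinner:
  assumes "thinner q p" and "q x \<noteq> x" and "has_infinite_descent q x"
  shows "has_infinite_descent p x"
proof -
  obtain v where v0: "v 0 = x" and v: "\<And>n. q (v (Suc n)) = v n"
    using assms(3) unfolding has_infinite_descent_def by blast
  have moved: "q (v n) \<noteq> v n" for n
  proof (induction n)
    case 0 show ?case using v0 assms(2) by simp
  next
    case (Suc n) then show ?case using v[of n] by metis
  qed
  have "p (v (Suc n)) = v n" for n
    using assms(1) moved[of "Suc n"] v[of n] unfolding thinner_def by (metis insertE singletonD)
  with v0 show ?thesis unfolding has_infinite_descent_def by blast
qed

lemma thinner_leafless_part: "thinner (leafless_part p) p"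
  unfolding thinner_def leafless_part_def by auto

lemma leafless_leafless_part: "leafless (leafless_part p)"
  unfolding leafless_def
proof (intro surjI)
  fix w
  show "leafless_part p (if has_infinite_descent p w
          then SOME u. p u = w \<and> has_infinite_descent p u else w) = w"
  proof (cases "has_infinite_descent p w")
    case True
    then have "\<exists>u. p u = w \<and> has_infinite_descent p u" by (metis has_infinite_descent_step)
    from someI_ex[OF this] True show ?thesis unfolding leafless_part_def by simp
  qed (simp add: leafless_part_def)
qed

lemma thinner_leafless_part_greatest:
  assumes "leafless q" and "thinner q p"
  shows "thinner q (leafless_part p)"
  unfolding thinner_def
proof
  fix x
  show "q x \<in> {x, leafless_part p x}"
  proof (cases "q x = x")
    case False
    then have "q x = p x" using assms(2) unfolding thinner_def by blast
    moreover have "has_infinite_descent p x"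
      using has_infinite_descent_thinner[OF assms(2) False leafless_has_infinite_descent[OF assms(1)]] .
    ultimately show ?thesis unfolding leafless_part_def by simp
  qed simp
qed

lemma leafless_support_eq_leafless_part:
  assumes "directed_forest p"
  shows "leafless_support p = leafless_part p"
  using directed_forest_thinner[OF assms thinner_leafless_part] leafless_leafless_part
    thinner_leafless_part thinner_leafless_part_greatest
  by (rule leafless_support_eqI)

theorem lemma4p5:
  fixes p :: "'a \<Rightarrow> 'a" and v0 :: 'a
  assumes "directed_forest p"
  shows "v0 \<notin> roots (leafless_support p) \<longleftrightarrow>
    (v0 \<notin> roots p \<and> (\<exists>v :: nat \<Rightarrow> 'a. v 0 = v0 \<and> (\<forall>n. p (v (Suc n)) = v n)))"
  unfolding leafless_support_eq_leafless_part[OF assms] roots_def leafless_part_def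
    has_infinite_descent_def
  by auto

end
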